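(* Let $F$ be a field, $V$ a nonzero vector space over $F$, $\Gamma$ a nonempty set, $\varphi:\Gamma\to\Gamma$ a map and $\mathfrak{w}\in F^\Gamma$, and let $\sigma_{\varphi,\mathfrak{w}}:V^\Gamma\to V^\Gamma$, $(x_\alpha)_{\alpha\in\Gamma}\mapsto(\mathfrak{w}_\alpha x_{\varphi(\alpha)})_{\alpha\in\Gamma}$. If $W(\varphi)\setminus\downarrow\mathfrak{Z}\neq\varnothing$, then $F\setminus\{0\}\subseteq{\rm Eigen}(\sigma_{\varphi,\mathfrak{w}},V^\Gamma)$; moreover in this case ${\rm Eigen}(\sigma_{\varphi,\mathfrak{w}},V^\Gamma)=F\setminus\{0\}$ if $\varphi(\Gamma\setminus\mathfrak{Z})=\Gamma$, and ${\rm Eigen}(\sigma_{\varphi,\mathfrak{w}},V^\Gamma)=F$ otherwise.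
   Context: For a linear map $T:W\to W$ on an $F$-vector space $W$, ${\rm Eigen}(T,W)$ is the set of all $r\in F$ such that $T(x)=rx$ for some nonzero $x\in W$. $\mathfrak{Z}:=\{\alpha\in\Gamma:\mathfrak{w}_\alpha=0\}$ and $\downarrow\mathfrak{Z}:=\bigcup_{n\geq0}\varphi^{-n}(\mathfrak{Z})$. A point $a\in\Gamma$ is wandering if the sequence $(\varphi^n(a))_{n\geq1}$ is one-to-one; $W(\varphi)$ is the set of wandering points. *)

theory Defs
  imports Complex_Main "HOL-Library.Function_Algebras"
begin

definition Eigen :: "('f \<Rightarrow> 'w \<Rightarrow> 'w::zero) \<Rightarrow> ('w \<Rightarrow> 'w) \<Rightarrow> 'w set \<Rightarrow> 'f set" where
  "Eigen sc T W = {r. \<exists>x\<in>W. x \<noteq> 0 \<and> T x = sc r x}"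

definition fscale :: "('f \<Rightarrow> 'v \<Rightarrow> 'v) \<Rightarrow> 'f \<Rightarrow> ('g \<Rightarrow> 'v) \<Rightarrow> ('g \<Rightarrow> 'v)" where
  "fscale sc r x = (\<lambda>\<alpha>. sc r (x \<alpha>))"

definition wshift :: "('f \<Rightarrow> 'v \<Rightarrow> 'v) \<Rightarrow> ('g \<Rightarrow> 'g) \<Rightarrow> ('g \<Rightarrow> 'f) \<Rightarrow> ('g \<Rightarrow> 'v) \<Rightarrow> ('g \<Rightarrow> 'v)" where
  "wshift sc \<phi> w x = (\<lambda>\<alpha>. sc (w \<alpha>) (x (\<phi> \<alpha>)))"

definition zeroset :: "('g \<Rightarrow> 'f::zero) \<Rightarrow> 'g set" where
  "zeroset w = {\<alpha>. w \<alpha> = 0}"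

definition downset :: "('g \<Rightarrow> 'g) \<Rightarrow> 'g set \<Rightarrow> 'g set" where
  "downset \<phi> Z = (\<Union>n::nat. (\<phi> ^^ n) -` Z)"

definition wandering :: "('g \<Rightarrow> 'g) \<Rightarrow> 'g set" where
  "wandering \<phi> = {a. inj_on (\<lambda>n::nat. (\<phi> ^^ n) a) {1..}}"

end

theory Submission
  imports Defs
begin

text \<open>Since scalars act on a fixed nonzero vector \<open>v\<close>, it suffices to find a nonzero
  scalar function \<open>f\<close> with \<open>w \<alpha> * f (\<phi> \<alpha>) = r * f \<alpha>\<close>. Along the injective orbit
  \<open>a\<^sub>n = \<phi>\<^sup>n a\<^sub>0\<close> of a wandering point outside \<open>downset \<phi> (zeroset w)\<close> all weights are
  nonzero, so \<open>f (a\<^sub>n) = \<Prod>j<n. r / w a\<^sub>j\<close> solves the relation for any \<open>r \<noteq> 0\<close>. Read as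
  \<open>f \<alpha> = (w \<alpha> / r) * f (\<phi> \<alpha>)\<close>, the relation then extends \<open>f\<close> to every point whose
  forward orbit reaches the orbit, and \<open>f = 0\<close> elsewhere.
  The eigenvalue \<open>0\<close> occurs exactly when some point has no preimage under \<open>\<phi>\<close> with
  nonzero weight: its indicator is then a \<open>0\<close>-eigenvector, and otherwise \<open>\<sigma> x = 0\<close> forces \<open>x = 0\<close>.\<close>

definition hitting_time :: "('g \<Rightarrow> 'g) \<Rightarrow> 'g set \<Rightarrow> 'g \<Rightarrow> nat" where
  "hitting_time \<phi> A \<alpha> = (LEAST m. (\<phi> ^^ m) \<alpha> \<in> A)"

lemma hitting_time_eq_0: "\<alpha> \<in> A \<Longrightarrow> hitting_time \<phi> A \<alpha> = 0"
  unfolding hitting_time_def by (rule Least_eq_0) simp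

lemma hitting_time_step:
  assumes "(\<phi> ^^ m) \<alpha> \<in> A" and "\<alpha> \<notin> A"
  shows "hitting_time \<phi> A \<alpha> = Suc (hitting_time \<phi> A (\<phi> \<alpha>))"
  unfolding hitting_time_def
  using Least_Suc[of "\<lambda>m. (\<phi> ^^ m) \<alpha> \<in> A", OF assms(1)] assms(2)
  by (simp add: funpow_Suc_right del: funpow.simps)

definition eigen_extension ::
    "('g \<Rightarrow> 'g) \<Rightarrow> ('g \<Rightarrow> 'f::field) \<Rightarrow> 'f \<Rightarrow> 'g set \<Rightarrow> ('g \<Rightarrow> 'f) \<Rightarrow> 'g \<Rightarrow> 'f" where
  "eigen_extension \<phi> w r A f\<^sub>0 \<alpha> =
    (if \<exists>m. (\<phi> ^^ m) \<alpha> \<in> A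
     then (\<Prod>j<hitting_time \<phi> A \<alpha>. w ((\<phi> ^^ j) \<alpha>) / r) * f\<^sub>0 ((\<phi> ^^ hitting_time \<phi> A \<alpha>) \<alpha>)
     else 0)"

lemma eigen_extension_on: "\<alpha> \<in> A \<Longrightarrow> eigen_extension \<phi> w r A f\<^sub>0 \<alpha> = f\<^sub>0 \<alpha>"
proof -
  assume "\<alpha> \<in> A"
  moreover have "\<exists>m. (\<phi> ^^ m) \<alpha> \<in> A"
    using \<open>\<alpha> \<in> A\<close> by (intro exI[of _ 0]) simp
  ultimately show ?thesis by (simp add: eigen_extension_def hitting_time_eq_0)
qed

lemma eigen_extension_step:
  assumes "\<alpha> \<notin> A"
  shows "eigen_extension \<phi> w r A f\<^sub>0 \<alpha> = w \<alpha> / r * eigen_extension \<phi> w r A f\<^sub>0 (\<phi> \<alpha>)"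
proof (cases "\<exists>m. (\<phi> ^^ m) \<alpha> \<in> A")
  case False
  then have "\<not> (\<exists>m. (\<phi> ^^ m) (\<phi> \<alpha>) \<in> A)"
    by (metis funpow_Suc_right comp_apply)
  with False show ?thesis by (simp add: eigen_extension_def)
next
  case True
  then obtain m where m: "(\<phi> ^^ m) \<alpha> \<in> A" by blast
  with assms obtain k where "m = Suc k" by (cases m) auto
  with m have hit: "(\<phi> ^^ k) (\<phi> \<alpha>) \<in> A"
    by (simp add: funpow_Suc_right del: funpow.simps)
  define t where "t = hitting_time \<phi> A (\<phi> \<alpha>)"
  have time: "hitting_time \<phi> A \<alpha> = Suc t"
    unfolding t_def using m assms by (rule hitting_time_step)
  have "(\<Prod>j<hitting_time \<phi> A \<alpha>. w ((\<phi> ^^ j) \<alpha>) / r)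
      = w \<alpha> / r * (\<Prod>j<t. w ((\<phi> ^^ j) (\<phi> \<alpha>)) / r)"
    unfolding time prod.lessThan_Suc_shift by (simp add: funpow_Suc_right del: funpow.simps)
  moreover have "(\<phi> ^^ hitting_time \<phi> A \<alpha>) \<alpha> = (\<phi> ^^ t) (\<phi> \<alpha>)"
    unfolding time by (simp add: funpow_Suc_right del: funpow.simps)
  ultimately have "eigen_extension \<phi> w r A f\<^sub>0 \<alpha>
      = w \<alpha> / r * ((\<Prod>j<t. w ((\<phi> ^^ j) (\<phi> \<alpha>)) / r) * f\<^sub>0 ((\<phi> ^^ t) (\<phi> \<alpha>)))"
    using True by (simp add: eigen_extension_def)
  also have "\<dots> = w \<alpha> / r * eigen_extension \<phi> w r A f\<^sub>0 (\<phi> \<alpha>)"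
    using hit by (auto simp: eigen_extension_def t_def)
  finally show ?thesis .
qed

lemma eigen_extension_relation:
  fixes w :: "'g \<Rightarrow> 'f::field"
  assumes "r \<noteq> 0" and "\<phi> ` A \<subseteq> A"
    and "\<And>\<alpha>. \<alpha> \<in> A \<Longrightarrow> w \<alpha> * f\<^sub>0 (\<phi> \<alpha>) = r * f\<^sub>0 \<alpha>"
  shows "w \<alpha> * eigen_extension \<phi> w r A f\<^sub>0 (\<phi> \<alpha>) = r * eigen_extension \<phi> w r A f\<^sub>0 \<alpha>"
proof (cases "\<alpha> \<in> A")
  case True
  with assms(2,3) show ?thesis by (auto simp: eigen_extension_on)
next
  case False
  with \<open>r \<noteq> 0\<close> show ?thesis by (simp add: eigen_extension_step)
qed

lemma wandering_orbit_inj: "a \<in> wandering \<phi> \<Longrightarrow> inj (\<lambda>n. (\<phi> ^^ n) a)"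
proof (rule injI)
  fix n m
  assume "a \<in> wandering \<phi>" and "(\<phi> ^^ n) a = (\<phi> ^^ m) a"
  then have "inj_on (\<lambda>n. (\<phi> ^^ n) a) {1..}" and "(\<phi> ^^ Suc n) a = (\<phi> ^^ Suc m) a"
    by (simp_all add: wandering_def)
  then have "Suc n = Suc m" by (rule inj_onD) simp_all
  then show "n = m" by simp
qed

lemma orbit_notin_if_notin_downset: "a \<notin> downset \<phi> Z \<Longrightarrow> (\<phi> ^^ n) a \<notin> Z"
  by (auto simp: downset_def)

lemma scalar_eigenfunction_exists:
  fixes w :: "'g \<Rightarrow> 'f::field"
  assumes "r \<noteq> 0" and "inj (\<lambda>n. (\<phi> ^^ n) a)" and "\<And>n. w ((\<phi> ^^ n) a) \<noteq> 0"
  obtains f where "f a = 1" and "\<And>\<alpha>. w \<alpha> * f (\<phi> \<alpha>) = r * f \<alpha>"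
proof -
  define orbit where "orbit = (\<lambda>n. (\<phi> ^^ n) a)"
  define f\<^sub>0 where "f\<^sub>0 \<beta> = (\<Prod>j<inv orbit \<beta>. r / w (orbit j))" for \<beta>
  have "inj orbit" using assms(2) by (simp add: orbit_def)
  then have f\<^sub>0_orbit: "f\<^sub>0 (orbit n) = (\<Prod>j<n. r / w (orbit j))" for n
    by (simp add: f\<^sub>0_def)
  have orbit_step: "\<phi> (orbit n) = orbit (Suc n)" for n
    by (simp add: orbit_def)
  then have invariant: "\<phi> ` range orbit \<subseteq> range orbit" by auto
  have "w (orbit n) \<noteq> 0" for n
    using assms(3) by (simp add: orbit_def)
  then have "w (orbit n) * f\<^sub>0 (\<phi> (orbit n)) = r * f\<^sub>0 (orbit n)" for n
    unfolding orbit_step by (simp add: f\<^sub>0_orbit)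
  then have relation_on_orbit: "w \<beta> * f\<^sub>0 (\<phi> \<beta>) = r * f\<^sub>0 \<beta>" if "\<beta> \<in> range orbit" for \<beta>
    using that by auto
  have "w \<alpha> * eigen_extension \<phi> w r (range orbit) f\<^sub>0 (\<phi> \<alpha>)
      = r * eigen_extension \<phi> w r (range orbit) f\<^sub>0 \<alpha>" for \<alpha>
    using assms(1) invariant relation_on_orbit by (rule eigen_extension_relation)
  moreover have "orbit 0 = a" by (simp add: orbit_def)
  then have "a \<in> range orbit" by (metis rangeI)
  with f\<^sub>0_orbit[of 0] \<open>orbit 0 = a\<close> have "eigen_extension \<phi> w r (range orbit) f\<^sub>0 a = 1"
    by (simp add: eigen_extension_on)
  ultimately show ?thesis using that by blast
qed

lemma in_Eigen_wshiftI:
  fixes sc :: "'f::field \<Rightarrow> 'v::ab_group_add \<Rightarrow> 'v" and v :: 'v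
  assumes "vector_space sc" and "v \<noteq> 0" and "f \<alpha>\<^sub>0 \<noteq> 0"
    and "\<And>\<alpha>. w \<alpha> * f (\<phi> \<alpha>) = r * f \<alpha>"
  shows "r \<in> Eigen (fscale sc) (wshift sc \<phi> w) UNIV"
proof -
  interpret vector_space sc by fact
  define x where "x \<alpha> = sc (f \<alpha>) v" for \<alpha>
  have "x \<alpha>\<^sub>0 \<noteq> 0" using assms(2,3) by (simp add: x_def)
  then have "x \<noteq> 0" by auto
  moreover have "wshift sc \<phi> w x = fscale sc r x"
    using assms(4) by (simp add: wshift_def fscale_def x_def)
  ultimately show ?thesis by (auto simp: Eigen_def)
qed

lemma zero_in_Eigen_wshift_iff:
  assumes "vector_space sc" and "\<exists>v::'v::ab_group_add. v \<noteq> 0"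
  shows "0 \<in> Eigen (fscale sc) (wshift sc \<phi> w) (UNIV :: ('g \<Rightarrow> 'v) set)
    \<longleftrightarrow> \<phi> ` (UNIV - zeroset w) \<noteq> UNIV"
proof
  interpret vector_space sc by fact
  assume "0 \<in> Eigen (fscale sc) (wshift sc \<phi> w) UNIV"
  then obtain x :: "'g \<Rightarrow> 'v" where "x \<noteq> 0" and eigen: "wshift sc \<phi> w x = fscale sc 0 x"
    by (auto simp: Eigen_def)
  from \<open>x \<noteq> 0\<close> obtain \<beta> where "x \<beta> \<noteq> 0" by (auto simp: zero_fun_def)
  have "sc (w \<alpha>) (x (\<phi> \<alpha>)) = 0" for \<alpha>
    using fun_cong[OF eigen, of \<alpha>] by (simp add: wshift_def fscale_def)
  with \<open>x \<beta> \<noteq> 0\<close> have "\<beta> \<notin> \<phi> ` (UNIV - zeroset w)"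
    by (auto simp: zeroset_def)
  then show "\<phi> ` (UNIV - zeroset w) \<noteq> UNIV" by blast
next
  interpret vector_space sc by fact
  assume "\<phi> ` (UNIV - zeroset w) \<noteq> UNIV"
  then obtain \<beta> where \<beta>: "\<beta> \<notin> \<phi> ` (UNIV - zeroset w)" by blast
  obtain v :: 'v where "v \<noteq> 0" using assms(2) by blast
  define x :: "'g \<Rightarrow> 'v" where "x \<alpha> = (if \<alpha> = \<beta> then v else 0)" for \<alpha>
  have "x \<noteq> 0" using \<open>v \<noteq> 0\<close> by (auto simp: x_def fun_eq_iff)
  moreover have "sc (w \<alpha>) (x (\<phi> \<alpha>)) = 0" for \<alpha>
  proof (cases "\<phi> \<alpha> = \<beta>")
    case True
    with \<beta> have "w \<alpha> = 0" unfolding zeroset_def by blast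
    then show ?thesis by simp
  next
    case False
    then show ?thesis by (simp add: x_def)
  qed
  then have "wshift sc \<phi> w x = fscale sc 0 x"
    by (simp add: wshift_def fscale_def del: scale_eq_0_iff)
  ultimately show "0 \<in> Eigen (fscale sc) (wshift sc \<phi> w) UNIV"
    by (auto simp: Eigen_def)
qed

lemma nonzero_subset_Eigen_wshift:
  fixes sc :: "'f::field \<Rightarrow> 'v::ab_group_add \<Rightarrow> 'v" and w :: "'g \<Rightarrow> 'f"
  assumes "vector_space sc" and "\<exists>v::'v. v \<noteq> 0"
    and "wandering \<phi> - downset \<phi> (zeroset w) \<noteq> {}"
  shows "UNIV - {0} \<subseteq> Eigen (fscale sc) (wshift sc \<phi> w) UNIV"
proof
  obtain v :: 'v where "v \<noteq> 0" using assms(2) by blast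
  obtain a where "a \<in> wandering \<phi>" and "a \<notin> downset \<phi> (zeroset w)"
    using assms(3) by blast
  have orbit_inj: "inj (\<lambda>n. (\<phi> ^^ n) a)"
    using \<open>a \<in> wandering \<phi>\<close> by (rule wandering_orbit_inj)
  have weights: "w ((\<phi> ^^ n) a) \<noteq> 0" for n
    using orbit_notin_if_notin_downset[OF \<open>a \<notin> downset \<phi> (zeroset w)\<close>, of n]
    by (simp add: zeroset_def)
  fix r :: 'f
  assume "r \<in> UNIV - {0}"
  then have "r \<noteq> 0" by simp
  then obtain f where "f a = 1" and f_relation: "\<And>\<alpha>. w \<alpha> * f (\<phi> \<alpha>) = r * f \<alpha>"
    using scalar_eigenfunction_exists[where \<phi> = \<phi> and a = a and w = w,
        OF \<open>r \<noteq> 0\<close> orbit_inj weights]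
    by blast
  then have "f a \<noteq> 0" by simp
  show "r \<in> Eigen (fscale sc) (wshift sc \<phi> w) UNIV"
    using assms(1) \<open>v \<noteq> 0\<close> \<open>f a \<noteq> 0\<close> f_relation by (rule in_Eigen_wshiftI)
qed

theorem lemma2p5:
  fixes sc :: "'f::field \<Rightarrow> 'v::ab_group_add \<Rightarrow> 'v"
    and \<phi> :: "'g \<Rightarrow> 'g" and w :: "'g \<Rightarrow> 'f"
  assumes "vector_space sc"
    and "\<exists>v::'v. v \<noteq> 0"
    and "wandering \<phi> - downset \<phi> (zeroset w) \<noteq> {}"
  shows "UNIV - {0} \<subseteq> Eigen (fscale sc) (wshift sc \<phi> w) UNIV
    \<and> (\<phi> ` (UNIV - zeroset w) = UNIV \<longrightarrow> Eigen (fscale sc) (wshift sc \<phi> w) UNIV = UNIV - {0})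
    \<and> (\<phi> ` (UNIV - zeroset w) \<noteq> UNIV \<longrightarrow> Eigen (fscale sc) (wshift sc \<phi> w) UNIV = UNIV)"
proof -
  have "UNIV - {0} \<subseteq> Eigen (fscale sc) (wshift sc \<phi> w) UNIV"
    using assms by (rule nonzero_subset_Eigen_wshift)
  moreover have "0 \<in> Eigen (fscale sc) (wshift sc \<phi> w) UNIV \<longleftrightarrow> \<phi> ` (UNIV - zeroset w) \<noteq> UNIV"
    using assms(1,2) by (rule zero_in_Eigen_wshift_iff)
  ultimately show ?thesis by auto
qed

end
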